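(* Let $B(\xi)=\sum_{n=0}^{\infty} c_n \xi^n$ be the power series expansion at $\xi=0$ of the function $B(\xi) = W\!\left(\frac{\xi^2-2}{2e}\right)$, where the branches of the Lambert $W$ function are chosen so that $B$ is analytic on the disc $|\xi|<\sqrt{2}$ with $B(0)=-1$ and $B'(0)=1$ (so $c_0=-1$, $c_1=1$, $c_2=-\tfrac13$, $c_3=\tfrac{11}{72}$, $c_4=-\tfrac{43}{540},\dots$). Then for all $n\ge 0$, $|c_n| < 2\cdot (4/5)^n$, and also $|c_n|\le 1$.
   Context: The Lambert $W$ function is the (multivalued) inverse of $w\mapsto we^w$, i.e. $W(z)e^{W(z)}=z$. Equivalently, $B$ is the unique function analytic on $|\xi|<\sqrt2$ satisfying $B(\xi)e^{B(\xi)} = (\xi^2-2)/(2e)$ with $B(0)=-1$, $B'(0)=1$. In terms of the standard branches $W_k$, $B(\xi)=W_k((\xi^2-2)/(2e))$ with $k=0$ if $-\pi/2<\arg\xi\le\pi/2$, and $k=\pm1$ otherwise. *)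

theory Defs
  imports "HOL-Complex_Analysis.Complex_Analysis"
begin

definition taylor_coeff :: "(complex \<Rightarrow> complex) \<Rightarrow> nat \<Rightarrow> complex" where
  "taylor_coeff f n = (deriv ^^ n) f 0 / of_nat (fact n)"

end

theory Submission
  imports Defs
begin

text \<open>
  With \<open>u = B + 1\<close> the defining equation becomes \<open>(1 - u) e\<^sup>u = 1 - \<xi>\<^sup>2/2\<close> with \<open>u(0) = 0\<close>.
  For \<open>|\<xi>| \<le> 7/5\<close> the right-hand side lies in the disc \<open>|w - 1| \<le> 49/50\<close>, which
  \<open>(1 - z) e\<^sup>z\<close> misses on the boundary of the rectangle \<open>-6 \<le> Re z \<le> 1\<close>, \<open>|Im z| \<le> \<pi>\<close>.
  By connectedness \<open>u\<close> maps the closed disc of radius \<open>7/5\<close> into that rectangle, so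
  \<open>|u| \<le> 34/5\<close> there and Cauchy's estimate gives \<open>|c\<^sub>n| \<le> (34/5)(5/7)\<^sup>n\<close>, which suffices for
  \<open>n \<ge> 11\<close>. The coefficients up to \<open>c\<^sub>1\<^sub>0\<close> are computed exactly from the recurrence
  given by the differential equation \<open>u u' (2 - \<xi>\<^sup>2) = 2 \<xi> (1 - u)\<close>.
\<close>

lemma taylor_coeff_add_const:
  fixes f :: "complex \<Rightarrow> complex"
  assumes "f holomorphic_on S" "open S" "0 \<in> S" "1 \<le> n"
  shows "taylor_coeff (\<lambda>z. f z + c) n = taylor_coeff f n"
proof -
  have "(deriv ^^ n) (\<lambda>z. f z + c) 0 = (deriv ^^ n) f 0 + (deriv ^^ n) (\<lambda>z. c) 0"
    using assms by (intro higher_deriv_add) auto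
  then show ?thesis using \<open>1 \<le> n\<close> by (simp add: taylor_coeff_def)
qed

lemma norm_taylor_coeff_le:
  fixes f :: "complex \<Rightarrow> complex"
  assumes "f holomorphic_on ball 0 r" "continuous_on (cball 0 r) f" "0 < r"
    and "\<And>z. norm z = r \<Longrightarrow> norm (f z) \<le> M"
  shows "norm (taylor_coeff f n) \<le> M / r ^ n"
proof -
  have "norm ((deriv ^^ n) f 0) \<le> fact n * M / r ^ n"
    using assms by (intro Cauchy_inequality) auto
  then have "norm ((deriv ^^ n) f 0) / fact n \<le> (fact n * M / r ^ n) / fact n"
    by (rule divide_right_mono) simp
  then show ?thesis by (simp add: taylor_coeff_def norm_divide)
qed

lemma pi_squared_less_10: "pi\<^sup>2 < 10"
proof -
  have "pi * pi \<le> 3.15 * 3.15" using pi_approx(2) by (intro mult_mono) auto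
  then show ?thesis by (simp add: power2_eq_square)
qed

lemma exp_6_gt: "387 < exp (6::real)"
proof -
  have "2.7 \<le> exp (1::real)" using e_approx_32 by (simp add: abs_if split: if_splits)
  have "387 < (2.7::real) ^ 6" by (simp add: power_divide)
  also have "\<dots> \<le> exp (1::real) ^ 6" using \<open>2.7 \<le> exp 1\<close> by (rule power_mono) simp
  also have "\<dots> = exp 6" using exp_of_nat_mult[of 6 "1::real"] by simp
  finally show ?thesis .
qed

lemma dist_lambert_map_frontier_rectangle:
  fixes z :: complex
  assumes "z \<in> cbox (Complex (-6) (-pi)) (Complex 1 pi)" "z \<notin> box (Complex (-6) (-pi)) (Complex 1 pi)"
  shows "49/50 < dist ((1 - z) * exp z) 1"
proof -
  define w where "w = (1 - z) * exp z"
  define x y where "x = Re z" and "y = Im z"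
  have rect: "-6 \<le> x" "x \<le> 1" "\<bar>y\<bar> \<le> pi" and side: "\<bar>y\<bar> = pi \<or> x = 1 \<or> x = -6"
    using assms by (auto simp: x_def y_def in_cbox_complex_iff in_box_complex_iff)
  have Re_w: "Re w = exp x * ((1 - x) * cos y + y * sin y)"
    and Im_w: "Im w = exp x * ((1 - x) * sin y - y * cos y)"
    by (simp_all add: w_def x_def y_def Re_exp Im_exp algebra_simps)
  consider "\<bar>y\<bar> = pi" | "x = 1" | "x = -6" using side by blast
  then have "49/50 < dist w 1"
  proof cases
    case 1
    then have "y = pi \<or> y = -pi" by linarith
    then have "sin y = 0" "cos y = -1" by auto
    then have "Re w = - (exp x * (1 - x))" unfolding Re_w by (simp add: algebra_simps)
    also have "\<dots> \<le> 0" using rect by simp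
    finally have "Re w \<le> 0" .
    moreover have "\<bar>Re (w - 1)\<bar> \<le> dist w 1"
      by (metis abs_Re_le_cmod dist_norm)
    ultimately show ?thesis by simp
  next
    case 2
    have "y * sin y \<le> y\<^sup>2"
      using abs_sin_x_le_abs_x[of y]
      by (metis abs_ge_self abs_mult abs_mult_self_eq dual_order.trans mult_left_mono abs_ge_zero power2_eq_square)
    moreover have "2 \<le> exp (1::real)" using exp_ge_add_one_self[of 1] by simp
    ultimately have "0 \<le> exp 1 * y\<^sup>2 * (exp 1 - 2) + 2 * exp 1 * (y\<^sup>2 - y * sin y)"
      by simp
    also have "\<dots> = (exp 1 * y * sin y - 1)\<^sup>2 + (exp 1 * y * cos y)\<^sup>2 - 1"
      by (simp add: power_mult_distrib cos_squared_eq power2_diff algebra_simps power2_eq_square[of "exp 1"])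
    also have "\<dots> = (dist w 1)\<^sup>2 - 1"
      unfolding dist_norm cmod_power2 using Re_w Im_w 2 by (simp add: power2_eq_square algebra_simps)
    finally have "1 \<le> dist w 1"
      by (metis diff_ge_0_iff_ge one_power2 power2_le_imp_le zero_le_dist)
    then show ?thesis by simp
  next
    case 3
    have "(norm (1 - z))\<^sup>2 = 49 + y\<^sup>2" using 3 by (simp add: cmod_power2 x_def y_def)
    also have "\<dots> < (exp 6 / 50)\<^sup>2"
    proof -
      have "y\<^sup>2 \<le> pi\<^sup>2" using rect(3) by (simp add: abs_le_square_iff[symmetric])
      then have "49 + y\<^sup>2 < 59" using pi_squared_less_10 by simp
      also have "\<dots> < (387 / 50)\<^sup>2" by (simp add: power2_eq_square)
      also have "\<dots> < (exp 6 / 50)\<^sup>2" using exp_6_gt by (intro power_strict_mono) auto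
      finally show ?thesis .
    qed
    finally have "norm (1 - z) < exp 6 / 50" by (rule power2_less_imp_less) simp
    moreover have "norm w = norm (1 - z) / exp 6"
      using 3 by (simp add: w_def norm_mult x_def exp_minus divide_inverse)
    ultimately have "norm w < 1/50" by (simp add: divide_less_eq)
    moreover have "1 - norm w \<le> dist w 1"
      by (metis dist_commute dist_norm norm_minus_commute norm_one norm_triangle_ineq2)
    ultimately show ?thesis by simp
  qed
  then show ?thesis by (simp add: w_def)
qed

lemma lambert_image_in_rectangle:
  fixes u :: "complex \<Rightarrow> complex"
  assumes S: "connected S" and u: "continuous_on S u" and "a \<in> S" "u a = 0"
    and near_one: "\<And>\<xi>. \<xi> \<in> S \<Longrightarrow> dist ((1 - u \<xi>) * exp (u \<xi>)) 1 \<le> 49/50"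
  shows "u ` S \<subseteq> box (Complex (-6) (-pi)) (Complex 1 pi)"
proof (rule ccontr)
  define T where "T = box (Complex (-6) (-pi)) (Complex 1 pi)"
  assume "\<not> u ` S \<subseteq> T"
  then have "u ` S - T \<noteq> {}" by blast
  moreover have "0 \<in> u ` S \<inter> T" using \<open>a \<in> S\<close> \<open>u a = 0\<close> by (force simp: T_def in_box_complex_iff)
  moreover have "connected (u ` S)" using u S by (rule connected_continuous_image)
  ultimately obtain \<xi> where "\<xi> \<in> S" "u \<xi> \<in> frontier T"
    using connected_Int_frontier by blast
  moreover have "frontier T = cbox (Complex (-6) (-pi)) (Complex 1 pi) - T"
    using \<open>0 \<in> u ` S \<inter> T\<close> by (auto simp: T_def frontier_box)
  ultimately show False
    using near_one dist_lambert_map_frontier_rectangle[of "u \<xi>"] by (force simp: T_def)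
qed

lemma norm_le_of_in_rectangle:
  fixes z :: complex
  assumes "z \<in> box (Complex (-6) (-pi)) (Complex 1 pi)"
  shows "norm z \<le> 34/5"
proof -
  have "\<bar>Re z\<bar> \<le> 6" "\<bar>Im z\<bar> \<le> pi" using assms by (auto simp: in_box_complex_iff)
  then have "(Re z)\<^sup>2 \<le> 6\<^sup>2" "(Im z)\<^sup>2 \<le> pi\<^sup>2" by (simp_all only: power2_le_iff_abs_le)
  then have "(norm z)\<^sup>2 \<le> (34/5)\<^sup>2"
    using pi_squared_less_10 by (simp add: cmod_power2 power2_eq_square[of "34/5"])
  then show ?thesis by (rule power2_le_imp_le) simp
qed

lemma lambert_taylor_coeff_bound:
  fixes u :: "complex \<Rightarrow> complex"
  assumes holo: "u holomorphic_on ball 0 (sqrt 2)" and "u 0 = 0"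
    and lambert: "\<And>\<xi>. \<xi> \<in> ball 0 (sqrt 2) \<Longrightarrow> (1 - u \<xi>) * exp (u \<xi>) = 1 - \<xi>\<^sup>2/2"
  shows "norm (taylor_coeff u n) \<le> 34/5 / (7/5) ^ n"
proof -
  have "7/5 < sqrt (2::real)" by (rule real_less_rsqrt) (simp add: power2_eq_square)
  then have disc: "cball (0::complex) (7/5) \<subseteq> ball 0 (sqrt 2)" by (simp add: cball_subset_ball_iff)
  have cont: "continuous_on (cball 0 (7/5)) u"
    using holo disc by (meson holomorphic_on_imp_continuous_on continuous_on_subset)
  have rect: "u ` cball 0 (7/5) \<subseteq> box (Complex (-6) (-pi)) (Complex 1 pi)"
  proof (rule lambert_image_in_rectangle[OF _ cont])
    show "dist ((1 - u \<xi>) * exp (u \<xi>)) 1 \<le> 49/50" if "\<xi> \<in> cball 0 (7/5)" for \<xi>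
    proof -
      have "dist ((1 - u \<xi>) * exp (u \<xi>)) 1 = norm (\<xi>\<^sup>2) / 2"
        using lambert that disc by (auto simp: dist_norm norm_divide)
      also have "\<dots> \<le> (7/5)\<^sup>2 / 2" using that by (simp add: norm_power power_mono)
      finally show ?thesis by (simp add: power2_eq_square)
    qed
  qed (use \<open>u 0 = 0\<close> in auto)
  show ?thesis
  proof (rule norm_taylor_coeff_le[OF _ cont])
    show "u holomorphic_on ball 0 (7/5)"
      using holo disc ball_subset_cball holomorphic_on_subset by blast
    show "norm (u z) \<le> 34/5" if "norm z = 7/5" for z
      using rect that by (intro norm_le_of_in_rectangle) auto
  qed simp
qed

lemma lambert_ode:
  fixes u :: "complex \<Rightarrow> complex"
  assumes holo: "u holomorphic_on S" and S: "open S" "\<xi> \<in> S"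
    and lambert: "\<And>\<xi>. \<xi> \<in> S \<Longrightarrow> (1 - u \<xi>) * exp (u \<xi>) = 1 - \<xi>\<^sup>2/2"
  shows "u \<xi> * deriv u \<xi> * (2 - \<xi>\<^sup>2) = 2 * \<xi> * (1 - u \<xi>)"
proof -
  have du: "(u has_field_derivative deriv u \<xi>) (at \<xi>)"
    using holo S by (rule holomorphic_derivI)
  have "((\<lambda>x. (1 - u x) * exp (u x)) has_field_derivative - (u \<xi> * deriv u \<xi> * exp (u \<xi>))) (at \<xi>)"
    using du by (auto intro!: derivative_eq_intros simp: algebra_simps)
  then have "((\<lambda>x. 1 - x\<^sup>2/2) has_field_derivative - (u \<xi> * deriv u \<xi> * exp (u \<xi>))) (at \<xi>)"
    using S lambert by (rule has_field_derivative_transform_within_open)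
  moreover have "((\<lambda>x. 1 - x\<^sup>2/2) has_field_derivative - \<xi>) (at \<xi>)"
    by (auto intro!: derivative_eq_intros)
  ultimately have key: "u \<xi> * deriv u \<xi> * exp (u \<xi>) = \<xi>"
    using DERIV_unique by fastforce
  have "2 - \<xi>\<^sup>2 = 2 * ((1 - u \<xi>) * exp (u \<xi>))"
    using lambert[OF S(2)] by simp
  then have "u \<xi> * deriv u \<xi> * (2 - \<xi>\<^sup>2) = 2 * (1 - u \<xi>) * (u \<xi> * deriv u \<xi> * exp (u \<xi>))"
    by (simp only: mult_ac)
  also have "\<dots> = 2 * \<xi> * (1 - u \<xi>)"
    unfolding key by (simp only: mult_ac)
  finally show ?thesis .
qed

lemma lambert_fps_ode:
  fixes u :: "complex \<Rightarrow> complex"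
  assumes holo: "u holomorphic_on ball 0 R" and "0 < R"
    and lambert: "\<And>\<xi>. \<xi> \<in> ball 0 R \<Longrightarrow> (1 - u \<xi>) * exp (u \<xi>) = 1 - \<xi>\<^sup>2/2"
  defines "U \<equiv> fps_expansion u 0"
  shows "U * fps_deriv U * (2 - fps_X\<^sup>2) = 2 * fps_X * (1 - U)"
proof (rule fps_expansion_unique_complex)
  have U: "u has_fps_expansion U"
    unfolding U_def using holo \<open>0 < R\<close> by (intro has_fps_expansion_fps_expansion) auto
  have ev: "eventually (\<lambda>\<xi>. 2 * \<xi> * (1 - u \<xi>) = u \<xi> * deriv u \<xi> * (2 - \<xi>\<^sup>2)) (nhds 0)"
    using lambert_ode[OF holo _ _ lambert] \<open>0 < R\<close>
    by (intro eventually_nhds_in_open[THEN eventually_mono, of "ball 0 R"]) auto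
  moreover have "(\<lambda>\<xi>. u \<xi> * deriv u \<xi> * (2 - \<xi>\<^sup>2)) has_fps_expansion U * fps_deriv U * (2 - fps_X\<^sup>2)"
    using U by (intro fps_expansion_intros)
  ultimately show "(\<lambda>\<xi>. 2 * \<xi> * (1 - u \<xi>)) has_fps_expansion U * fps_deriv U * (2 - fps_X\<^sup>2)"
    using has_fps_expansion_cong[OF ev refl] by simp
  show "(\<lambda>\<xi>. 2 * \<xi> * (1 - u \<xi>)) has_fps_expansion 2 * fps_X * (1 - U)"
    using U by (intro fps_expansion_intros)
qed

lemma lambert_fps_nth:
  fixes U :: "complex fps"
  assumes ode: "U * fps_deriv U * (2 - fps_X\<^sup>2) = 2 * fps_X * (1 - U)"
    and U0: "U $ 0 = 0" and U1: "U $ 1 = 1"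
  shows "U $ 2 = -1/3" "U $ 3 = 11/72" "U $ 4 = -43/540" "U $ 5 = 769/17280"
    "U $ 6 = -221/8505" "U $ 7 = 680863/43545600" "U $ 8 = -1963/204120"
    "U $ 9 = 226287557/37623398400" "U $ 10 = -5776369/1515591000"
proof -
  define P where "P = U * fps_deriv U"
  have "(P * (2 - fps_X\<^sup>2)) $ m = 2 * P $ m - P $ (m - 2)" if "2 \<le> m" for m
    using that by (simp add: algebra_simps fps_X_power_mult_right_nth numeral_fps_const)
  moreover have "(2 * fps_X * (1 - U)) $ m = - 2 * U $ (m - 1)" if "2 \<le> m" for m
    using that by (simp add: mult.assoc)
  ultimately have rec: "2 * P $ m - P $ (m - 2) = - 2 * U $ (m - 1)" if "2 \<le> m" for m
    using ode that by (metis P_def)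
  have P: "P $ m = (\<Sum>i\<le>m. U $ i * (of_nat (m + 1 - i) * U $ (m + 1 - i)))" for m
    unfolding P_def fps_mult_nth fps_deriv_nth atLeast0AtMost
    by (intro sum.cong) (auto simp: Suc_diff_le)
  have U1': "U $ Suc 0 = 1" using U1 by simp \<comment> \<open>the index arithmetic below produces \<open>Suc 0\<close>\<close>
  \<comment> \<open>As \<open>U $ 0 = 0\<close>, the \<open>m\<close>-th equation is linear in \<open>U $ m\<close> with coefficient \<open>2(m + 1)\<close>.\<close>
  show c2: "U $ 2 = -1/3"
    using rec[of 2] unfolding P by (simp add: atMost_nat_numeral U0 U1') (simp add: field_simps; algebra)
  show c3: "U $ 3 = 11/72"
    using rec[of 3] unfolding P by (simp add: atMost_nat_numeral U0 U1' c2) (simp add: field_simps; algebra)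
  show c4: "U $ 4 = -43/540"
    using rec[of 4] unfolding P by (simp add: atMost_nat_numeral U0 U1' c2 c3) (simp add: field_simps; algebra)
  show c5: "U $ 5 = 769/17280"
    using rec[of 5] unfolding P by (simp add: atMost_nat_numeral U0 U1' c2 c3 c4) (simp add: field_simps; algebra)
  show c6: "U $ 6 = -221/8505"
    using rec[of 6] unfolding P by (simp add: atMost_nat_numeral U0 U1' c2 c3 c4 c5) (simp add: field_simps; algebra)
  show c7: "U $ 7 = 680863/43545600"
    using rec[of 7] unfolding P by (simp add: atMost_nat_numeral U0 U1' c2 c3 c4 c5 c6) (simp add: field_simps; algebra)
  show c8: "U $ 8 = -1963/204120"
    using rec[of 8] unfolding P by (simp add: atMost_nat_numeral U0 U1' c2 c3 c4 c5 c6 c7) (simp add: field_simps; algebra)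
  show c9: "U $ 9 = 226287557/37623398400"
    using rec[of 9] unfolding P by (simp add: atMost_nat_numeral U0 U1' c2 c3 c4 c5 c6 c7 c8) (simp add: field_simps; algebra)
  show "U $ 10 = -5776369/1515591000"
    using rec[of 10] unfolding P by (simp add: atMost_nat_numeral U0 U1' c2 c3 c4 c5 c6 c7 c8 c9) (simp add: field_simps; algebra)
qed

lemma lambert_small_taylor_coeff_bound:
  fixes u :: "complex \<Rightarrow> complex"
  assumes holo: "u holomorphic_on ball 0 R" and "0 < R" and "u 0 = 0" and "deriv u 0 = 1"
    and lambert: "\<And>\<xi>. \<xi> \<in> ball 0 R \<Longrightarrow> (1 - u \<xi>) * exp (u \<xi>) = 1 - \<xi>\<^sup>2/2"
    and "2 \<le> n" "n \<le> 10"
  shows "norm (taylor_coeff u n) < 2 * (4/5) ^ n \<and> norm (taylor_coeff u n) \<le> 1"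
proof -
  define U where "U = fps_expansion u 0"
  have U_nth: "taylor_coeff u k = U $ k" for k
    by (simp add: U_def fps_expansion_def taylor_coeff_def)
  have ode: "U * fps_deriv U * (2 - fps_X\<^sup>2) = 2 * fps_X * (1 - U)"
    unfolding U_def using holo \<open>0 < R\<close> lambert by (rule lambert_fps_ode)
  have "U $ 0 = 0" "U $ 1 = 1"
    using \<open>u 0 = 0\<close> \<open>deriv u 0 = 1\<close> by (simp_all add: U_nth[symmetric] taylor_coeff_def)
  note U_values = lambert_fps_nth[OF ode this]
  have "n \<in> {2, 3, 4, 5, 6, 7, 8, 9, 10}" using \<open>2 \<le> n\<close> \<open>n \<le> 10\<close> by (simp, presburger)
  then show ?thesis by (auto simp: U_nth U_values norm_divide power_divide)
qed

lemma geometric_bounds_from_11: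
  fixes n :: nat
  assumes "11 \<le> n"
  shows "34/5 * (5/7::real) ^ n < 2 * (4/5) ^ n" "2 * (4/5::real) ^ n < 1"
proof -
  obtain k where n: "n = 11 + k" using assms le_Suc_ex by blast
  have "34/5 * (5/7::real) ^ n = (34/5 * (5/7) ^ 11) * (5/7) ^ k" by (simp add: n power_add)
  also have "\<dots> < (2 * (4/5) ^ 11) * (5/7) ^ k" by (intro mult_strict_right_mono) (auto simp: power_divide)
  also have "\<dots> \<le> (2 * (4/5) ^ 11) * (4/5) ^ k" by (intro mult_left_mono power_mono) auto
  also have "\<dots> = 2 * (4/5) ^ n" by (simp add: n power_add)
  finally show "34/5 * (5/7::real) ^ n < 2 * (4/5) ^ n" .
  have "2 * (4/5::real) ^ n = (2 * (4/5) ^ 11) * (4/5) ^ k" by (simp add: n power_add)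
  also have "\<dots> \<le> 2 * (4/5) ^ 11" by (intro mult_left_le power_le_one) auto
  also have "\<dots> < 1" by (simp add: power_divide)
  finally show "2 * (4/5::real) ^ n < 1" .
qed

theorem theorem1:
  fixes B :: "complex \<Rightarrow> complex"
  assumes holo: "B holomorphic_on ball 0 (sqrt 2)"
    and eqn: "\<And>\<xi>. \<xi> \<in> ball 0 (sqrt 2) \<Longrightarrow> B \<xi> * exp (B \<xi>) = (\<xi>\<^sup>2 - 2) / (2 * exp 1)"
    and B0: "B 0 = -1"
    and B'0: "deriv B 0 = 1"
  shows "\<forall>n. norm (taylor_coeff B n) < 2 * (4/5) ^ n \<and> norm (taylor_coeff B n) \<le> 1"
proof
  fix n :: nat
  define u where "u = (\<lambda>\<xi>. B \<xi> + 1)"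
  have holo_u: "u holomorphic_on ball 0 (sqrt 2)" unfolding u_def using holo by (intro holomorphic_intros)
  have lambert: "(1 - u \<xi>) * exp (u \<xi>) = 1 - \<xi>\<^sup>2/2" if "\<xi> \<in> ball 0 (sqrt 2)" for \<xi>
    using eqn[OF that] by (simp add: u_def exp_add field_simps)
  have u0: "u 0 = 0" using B0 by (simp add: u_def)
  have coeff: "taylor_coeff B k = taylor_coeff u k" if "1 \<le> k" for k
    using taylor_coeff_add_const[OF holo _ _ that] by (simp add: u_def)
  have u'0: "deriv u 0 = 1" using coeff[of 1] B'0 by (simp add: taylor_coeff_def)
  consider "n = 0" | "n = 1" | "2 \<le> n" "n \<le> 10" | "11 \<le> n" by linarith
  then show "norm (taylor_coeff B n) < 2 * (4/5) ^ n \<and> norm (taylor_coeff B n) \<le> 1"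
  proof cases
    case 1
    then show ?thesis using B0 by (simp add: taylor_coeff_def)
  next
    case 2
    then show ?thesis using B'0 by (simp add: taylor_coeff_def)
  next
    case 3
    then show ?thesis
      using lambert_small_taylor_coeff_bound[OF holo_u _ u0 u'0 lambert] by (simp add: coeff)
  next
    case 4
    have "norm (taylor_coeff B n) \<le> 34/5 * (5/7) ^ n"
      using lambert_taylor_coeff_bound[OF holo_u u0 lambert, of n] 4
      by (simp add: coeff power_divide)
    with geometric_bounds_from_11[OF 4] show ?thesis by linarith
  qed
qed

end
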